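(* Consider the closed-loop system $\dot p=-R(p)^Te(p)-(L_o\otimes I_d)\bar p$, i.e. \[ \dot p_i=\sum_{j\in\mathcal{N}_i}(p_j-p_i)\big(\|p_j-p_i\|^2-d_{ij}^2\big)+\sum_{j\in\mathcal{N}_i^o}\Big((p_j-p_i)-(\hat p_j-\hat p_i)\Big),\quad i=1,\dots,n. \] This system is a gradient descent flow, $\dot p=-\nabla V(p)$, of the potential \[ V=\tfrac14\sum_{(i,j)\in\mathcal{E}}\big(\|p_i-p_j\|^2-d_{ij}^2\big)^2+\tfrac12\sum_{(i,j)\in\mathcal{E}_o}\big\|(p_j-p_i)-(\hat p_j-\hat p_i)\big\|^2, \] with $\dot V=-\|R^Te+(L_o\otimes I_d)\bar p\|^2\le 0$. Moreover, the induced dynamics of the relative position vector $z=(H\otimes I_d)p$ is self-contained, and its solutions converge to the largest invariant set contained in \[ \mathcal{O}(z)=\{z:\ R(z)^Te(z)+(L_o\otimes I_d)\bar p(z)=0\}. \]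
   Context: Let $d\in\{2,3\}$, $n\ge2$ agents with positions $p_i\in\mathbb{R}^d$, $p=[p_1^T,\dots,p_n^T]^T\in\mathbb{R}^{dn}$. $\mathcal{G}=(\mathcal{V},\mathcal{E})$ is an undirected graph on $\{1,\dots,n\}$ with $m$ edges, $\mathcal{N}_i=\{j:(i,j)\in\mathcal{E}\}$. Give each edge $k$ an arbitrary orientation with head $j$ and tail $i$; the incidence matrix $H\in\mathbb{R}^{m\times n}$ has $h_{ki}=1$ if edge $k$ sinks at $i$, $-1$ if it leaves $i$, $0$ otherwise. Then $z_k=p_j-p_i$, $z=[z_1^T,\dots,z_m^T]^T=(H\otimes I_d)p$, $Z(z)=\mathrm{diag}(z_1,\dots,z_m)\in\mathbb{R}^{dm\times m}$ (block diagonal), and the rigidity matrix is $R=Z(z)^T(H\otimes I_d)\in\mathbb{R}^{m\times dn}$. Each edge $k=(i,j)$ has desired distance $d_k=d_{ij}>0$ and squared distance error $e_k=\|p_i-p_j\|^2-d_k^2$, $e=[e_1,\dots,e_m]^T$. A set of orientation edges $\mathcal{E}_o\subseteq\mathcal{E}$ defines the undirected graph $\mathcal{G}_o=(\mathcal{V},\mathcal{E}_o)$ with neighbor sets $\mathcal{N}_i^o$ and Laplacian $L_o\in\mathbb{R}^{n\times n}$. Agents incident to some edge of $\mathcal{E}_o$ (orientation agents) are assigned points $\hat p_i\in\mathbb{R}^d$ so that $\hat p_j-\hat p_i$ is the desired relative position for $(i,j)\in\mathcal{E}_o$, with $\|\hat p_j-\hat p_i\|=d_{ij}$. Define $\bar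 p=[\bar p_1^T,\dots,\bar p_n^T]^T$ with $\bar p_i=p_i-\hat p_i$ for orientation agents and $\bar p_i=0$ otherwise; note $(L_o\otimes I_d)\bar p$ depends only on relative positions (hence on $z$). *)

theory Defs
  imports "HOL-Analysis.Analysis"
begin

text \<open>Agents are indexed by a finite type 'n (vertex set = UNIV, n = CARD('n)).
  The undirected edge set is given with an arbitrary orientation as a set E of ordered
  pairs (i,j) (tail i, head j), containing no loop and no pair together with its reverse.
  The relative-position vector z = (H (x) I_d) p lives in (real^'d)^('n \<times> 'n), where only
  the coordinates k \<in> E are used (all other coordinates are 0).\<close>

definition nbrs :: "('n::finite \<times> 'n) set \<Rightarrow> 'n \<Rightarrow> 'n set" where
  "nbrs E i = {j. (i, j) \<in> E \<or> (j, i) \<in> E}"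

definition inc :: "'n::finite \<times> 'n \<Rightarrow> 'n \<Rightarrow> real" where
  "inc k i = (if i = snd k then 1 else if i = fst k then -1 else 0)"

definition zof :: "('n::finite \<times> 'n) set \<Rightarrow> (real^'d)^'n \<Rightarrow> (real^'d)^('n \<times> 'n)" where
  "zof E p = (\<chi> k. if k \<in> E then p $ snd k - p $ fst k else 0)"

text \<open>R(z)^T e(z) = (H (x) I_d)^T Z(z) e(z), component i = sum_k h_{ki} e_k z_k,
  with e_k = ||z_k||^2 - d_k^2\<close>
definition rigTe :: "('n::finite \<times> 'n) set \<Rightarrow> ('n \<Rightarrow> 'n \<Rightarrow> real) \<Rightarrow> (real^'d)^('n \<times> 'n) \<Rightarrow> (real^'d)^'n" where
  "rigTe E d z = (\<chi> i. \<Sum>k\<in>E. (inc k i * ((norm (z $ k))\<^sup>2 - (d (fst k) (snd k))\<^sup>2)) *\<^sub>R (z $ k))"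

definition orient_agent :: "('n::finite \<times> 'n) set \<Rightarrow> 'n \<Rightarrow> bool" where
  "orient_agent Eo i = (\<exists>j. (i, j) \<in> Eo \<or> (j, i) \<in> Eo)"

definition pbar :: "('n::finite \<times> 'n) set \<Rightarrow> ('n \<Rightarrow> real^'d) \<Rightarrow> (real^'d)^'n \<Rightarrow> (real^'d)^'n" where
  "pbar Eo ph p = (\<chi> i. if orient_agent Eo i then p $ i - ph i else 0)"

definition lapbar :: "('n::finite \<times> 'n) set \<Rightarrow> ('n \<Rightarrow> real^'d) \<Rightarrow> (real^'d)^'n \<Rightarrow> (real^'d)^'n" where
  "lapbar Eo ph p = (\<chi> i. \<Sum>j\<in>nbrs Eo i. pbar Eo ph p $ i - pbar Eo ph p $ j)"

text \<open>signed relative position p_j - p_i read off from z, for (i,j) or (j,i) in E\<close>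
definition zrel :: "('n::finite \<times> 'n) set \<Rightarrow> (real^'d)^('n \<times> 'n) \<Rightarrow> 'n \<Rightarrow> 'n \<Rightarrow> real^'d" where
  "zrel E z i j = (if (i, j) \<in> E then z $ (i, j) else - (z $ (j, i)))"

text \<open>(L_o (x) I_d) \bar p(z) written as a function of z\<close>
definition lap_z :: "('n::finite \<times> 'n) set \<Rightarrow> ('n \<times> 'n) set \<Rightarrow> ('n \<Rightarrow> real^'d) \<Rightarrow> (real^'d)^('n \<times> 'n) \<Rightarrow> (real^'d)^'n" where
  "lap_z E Eo ph z = (\<chi> i. \<Sum>j\<in>nbrs Eo i. (ph j - ph i) - zrel E z i j)"

definition closed_loop :: "('n::finite \<times> 'n) set \<Rightarrow> ('n \<times> 'n) set \<Rightarrow> ('n \<Rightarrow> 'n \<Rightarrow> real) \<Rightarrow> ('n \<Rightarrow> real^'d)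
    \<Rightarrow> (real^'d)^'n \<Rightarrow> (real^'d)^'n" where
  "closed_loop E Eo d ph p = - (rigTe E d (zof E p) + lapbar Eo ph p)"

definition potential :: "('n::finite \<times> 'n) set \<Rightarrow> ('n \<times> 'n) set \<Rightarrow> ('n \<Rightarrow> 'n \<Rightarrow> real) \<Rightarrow> ('n \<Rightarrow> real^'d)
    \<Rightarrow> (real^'d)^'n \<Rightarrow> real" where
  "potential E Eo d ph p =
     1/4 * (\<Sum>(i, j)\<in>E. ((norm (p $ i - p $ j))\<^sup>2 - (d i j)\<^sup>2)\<^sup>2)
   + 1/2 * (\<Sum>(i, j)\<in>Eo. (norm ((p $ j - p $ i) - (ph j - ph i)))\<^sup>2)"

text \<open>the induced z-dynamics: zdot = F(z), F(z) = (H (x) I_d) f(p) for any p with z = (H (x) I_d) p\<close>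
definition zdyn :: "('n::finite \<times> 'n) set \<Rightarrow> ('n \<times> 'n) set \<Rightarrow> ('n \<Rightarrow> 'n \<Rightarrow> real) \<Rightarrow> ('n \<Rightarrow> real^'d)
    \<Rightarrow> (real^'d)^('n \<times> 'n) \<Rightarrow> (real^'d)^('n \<times> 'n)" where
  "zdyn E Eo d ph z = zof E (closed_loop E Eo d ph (SOME p. zof E p = z))"

text \<open>Invariant set (in both time directions) of xdot = F x on state space Z: every solution
  defined on an interval I containing 0 and starting in S stays in S on all of I.\<close>
definition invariant_set :: "('a::real_normed_vector \<Rightarrow> 'a) \<Rightarrow> 'a set \<Rightarrow> 'a set \<Rightarrow> bool" where
  "invariant_set F Z S \<longleftrightarrow> S \<subseteq> Z \<and>
     (\<forall>I x. is_interval I \<and> 0 \<in> I \<and> x 0 \<in> S \<and>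
        (\<forall>t\<in>I. x t \<in> Z \<and> (x has_vector_derivative F (x t)) (at t within I))
        \<longrightarrow> (\<forall>t\<in>I. x t \<in> S))"

definition largest_invariant_in :: "('a::real_normed_vector \<Rightarrow> 'a) \<Rightarrow> 'a set \<Rightarrow> 'a set \<Rightarrow> 'a set" where
  "largest_invariant_in F Z Ob = \<Union>{S. S \<subseteq> Ob \<and> invariant_set F Z S}"

end

theory Submission
  imports Defs
begin

text \<open>
  The closed-loop field and the potential depend on \<open>p\<close> only through the relative positions
  \<open>z = (H \<otimes> I\<^sub>d) p\<close>.  Written as functions \<open>field_z\<close> and \<open>potential_z\<close> of \<open>z\<close>, they
  satisfy \<open>D potential_z(z)((H \<otimes> I\<^sub>d) h) = - field_z(z) \<bullet> h\<close> (summation by parts against the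
  incidence matrix); this gives the gradient structure of the closed loop and the self-contained
  \<open>z\<close>-dynamics.  Solutions of the \<open>z\<close>-dynamics stay in the range of \<open>H \<otimes> I\<^sub>d\<close>, where the
  distance errors control every \<open>\<parallel>z\<^sub>k\<parallel>\<close>, so the decreasing potential confines them to a
  compact set.  There \<open>field_z\<close> is Lipschitz, hence \<open>field_z \<circ> z\<close> is uniformly continuous,
  and since the potential decreases at rate \<open>\<parallel>field_z(z(t))\<parallel>\<^sup>2\<close> this forces
  \<open>field_z(z(t)) \<longrightarrow> 0\<close> (Barbalat).  Limit points are therefore equilibria, and by Gronwall's
  inequality every equilibrium is an invariant singleton inside \<open>{field_z = 0}\<close>; so \<open>z(t)\<close>
  approaches the largest invariant subset of that set.
\<close>

section \<open>Gronwall, invariance and Lyapunov lemmas\<close>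

lemma abs_deriv_le_imp_vanishing_iff:
  fixes u u' :: "real \<Rightarrow> real"
  assumes ab: "a \<le> b"
    and u: "\<And>s. s \<in> {a..b} \<Longrightarrow> (u has_real_derivative u' s) (at s within {a..b})"
    and nonneg: "\<And>s. s \<in> {a..b} \<Longrightarrow> 0 \<le> u s"
    and bound: "\<And>s. s \<in> {a..b} \<Longrightarrow> \<bar>u' s\<bar> \<le> K * u s"
  shows "u a = 0 \<longleftrightarrow> u b = 0"
proof -
  \<comment> \<open>the weights \<open>exp (\<mp>K s)\<close> turn the Gronwall bound into monotonicity of \<open>exp (c s) * u s\<close>\<close>
  have mvt: "\<exists>\<xi>\<in>{a..b}. exp (c * b) * u b - exp (c * a) * u a
                        = (b - a) * (exp (c * \<xi>) * (u' \<xi> + c * u \<xi>))" for c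
  proof -
    have "((\<lambda>s. exp (c * s) * u s) has_derivative (*) (exp (c * s) * (u' s + c * u s)))
            (at s within {a..b})" if "a \<le> s" "s \<le> b" for s
    proof -
      have "((\<lambda>s. exp (c * s)) has_real_derivative exp (c * s) * c) (at s within {a..b})"
        by (rule derivative_eq_intros refl)+ simp
      from DERIV_mult[OF this u] that show ?thesis
        unfolding has_field_derivative_def by (simp add: algebra_simps mult.commute)
    qed
    from mvt_very_simple[OF ab this] show ?thesis by (simp add: mult.commute)
  qed
  show ?thesis
  proof
    assume ua: "u a = 0"
    obtain \<xi> where \<xi>: "\<xi> \<in> {a..b}"
      and eq: "exp (- K * b) * u b = (b - a) * (exp (- K * \<xi>) * (u' \<xi> + - K * u \<xi>))"
      using mvt[of "- K"] ua by auto
    have "u' \<xi> + - K * u \<xi> \<le> 0" using bound[OF \<xi>] by linarith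
    then have "exp (- K * b) * u b \<le> 0" using eq ab by (simp add: mult_nonneg_nonpos)
    then show "u b = 0" using nonneg[of b] ab by (simp add: mult_le_0_iff)
  next
    assume ub: "u b = 0"
    obtain \<xi> where \<xi>: "\<xi> \<in> {a..b}"
      and eq: "- (exp (K * a) * u a) = (b - a) * (exp (K * \<xi>) * (u' \<xi> + K * u \<xi>))"
      using mvt[of K] ub by auto
    have "0 \<le> u' \<xi> + K * u \<xi>" using bound[OF \<xi>] by linarith
    then have "exp (K * a) * u a \<le> 0" using eq ab by (smt (verit) mult_nonneg_nonneg exp_gt_zero)
    then show "u a = 0" using nonneg[of a] ab by (simp add: mult_le_0_iff)
  qed
qed

lemma has_real_derivative_inner_diff_self:
  fixes x :: "real \<Rightarrow> 'a::real_inner"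
  assumes "(x has_vector_derivative v) (at s within S)"
  shows "((\<lambda>r. (x r - c) \<bullet> (x r - c)) has_real_derivative 2 * ((x s - c) \<bullet> v)) (at s within S)"
proof -
  from has_derivative_diff[OF assms[unfolded has_vector_derivative_def] has_derivative_const]
  have "((\<lambda>r. x r - c) has_derivative (\<lambda>h. h *\<^sub>R v)) (at s within S)"
    by simp
  from has_derivative_inner[OF this this] show ?thesis
    unfolding has_field_derivative_def
    by (rule has_derivative_eq_rhs) (simp add: fun_eq_iff inner_commute algebra_simps)
qed

lemma abs_inner_le_of_lipschitz_on_zero:
  fixes F :: "'a::real_inner \<Rightarrow> 'a"
  assumes L: "L-lipschitz_on S F" and "x \<in> S" "w \<in> S" and "F w = 0"
  shows "\<bar>2 * ((x - w) \<bullet> F x)\<bar> \<le> (2 * L) * ((x - w) \<bullet> (x - w))"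
proof -
  have F: "norm (F x) \<le> L * norm (x - w)"
    using lipschitz_onD[OF L \<open>x \<in> S\<close> \<open>w \<in> S\<close>] \<open>F w = 0\<close> by (simp add: dist_norm)
  have "\<bar>2 * ((x - w) \<bullet> F x)\<bar> \<le> 2 * (norm (x - w) * norm (F x))"
    unfolding abs_mult using Cauchy_Schwarz_ineq2[of "x - w" "F x"] by simp
  also have "\<dots> \<le> 2 * (norm (x - w) * (L * norm (x - w)))"
    using F by (simp add: mult_left_mono)
  also have "\<dots> = (2 * L) * ((x - w) \<bullet> (x - w))"
    unfolding power2_norm_eq_inner[symmetric] by (simp add: power2_eq_square)
  finally show ?thesis .
qed

lemma solution_through_equilibrium_constant:
  fixes x :: "real \<Rightarrow> 'a::real_inner"
  assumes I: "is_interval I" "0 \<in> I" "t \<in> I"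
    and sol: "\<And>s. s \<in> I \<Longrightarrow> x s \<in> Z \<and> (x has_vector_derivative F (x s)) (at s within I)"
    and lip: "\<And>B. \<exists>L. L-lipschitz_on (Z \<inter> cball 0 B) F"
    and eq: "F (x 0) = 0"
  shows "x t = x 0"
proof -
  define a b where "a = min 0 t" and "b = max 0 t"
  have ends: "0 \<in> {a..b}" "t \<in> {a..b}" unfolding a_def b_def by auto
  have "{a..b} = closed_segment 0 t"
    by (simp add: closed_segment_eq_real_ivl a_def b_def)
  then have ab: "{a..b} \<subseteq> I"
    using is_interval_convex[OF I(1)] I(2,3) by (simp add: convex_contains_segment)
  have "continuous_on I x"
    unfolding continuous_on_eq_continuous_within
    using sol has_vector_derivative_continuous by blast
  then have "compact (x ` {a..b})"
    using ab by (intro compact_continuous_image) (auto intro: continuous_on_subset)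
  then have "bounded (x ` {a..b})" by (rule compact_imp_bounded)
  then obtain B where "\<forall>y\<in>x ` {a..b}. norm y \<le> B" unfolding bounded_iff by blast
  then have B: "\<And>s. s \<in> {a..b} \<Longrightarrow> norm (x s) \<le> B" by blast
  obtain L where L: "L-lipschitz_on (Z \<inter> cball 0 B) F" using lip by blast
  define u where "u s = (x s - x 0) \<bullet> (x s - x 0)" for s
  define u' where "u' s = 2 * ((x s - x 0) \<bullet> F (x s))" for s
  have u_deriv: "(u has_real_derivative u' s) (at s within {a..b})" if "s \<in> {a..b}" for s
  proof -
    have "(x has_vector_derivative F (x s)) (at s within {a..b})"
      using sol[of s] ab that has_vector_derivative_within_subset by blast
    from has_real_derivative_inner_diff_self[OF this] show ?thesis unfolding u_def u'_def .
  qed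
  have u_nonneg: "0 \<le> u s" for s by (simp add: u_def)
  have u'_bound: "\<bar>u' s\<bar> \<le> (2 * L) * u s" if "s \<in> {a..b}" for s
    unfolding u_def u'_def using sol ab B that ends
    by (intro abs_inner_le_of_lipschitz_on_zero[OF L _ _ eq]) auto
  have "a \<le> b" by (simp add: a_def b_def)
  from abs_deriv_le_imp_vanishing_iff[OF this u_deriv u_nonneg u'_bound]
  have "u a = 0 \<longleftrightarrow> u b = 0" .
  then have "u t = 0"
    by (cases "0 \<le> t") (auto simp: a_def b_def u_def)
  then show ?thesis by (simp add: u_def)
qed

lemma solution_stays_in_subspace:
  fixes x :: "real \<Rightarrow> 'a::euclidean_space"
  assumes S: "subspace S" and x0: "x 0 \<in> S" and t: "0 \<le> t"
    and x': "\<And>s. 0 \<le> s \<Longrightarrow> (x has_vector_derivative v s) (at s within {0..})"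
    and v: "\<And>s. 0 \<le> s \<Longrightarrow> v s \<in> S"
  shows "x t \<in> S"
proof -
  have span: "span S = S" using S by (rule span_eq_iff[THEN iffD2])
  obtain y q where y: "y \<in> S" and q: "\<And>w. w \<in> S \<Longrightarrow> q \<bullet> w = 0" and xt: "x t = y + q"
    using orthogonal_subspace_decomp_exists[of S "x t"] span by (auto simp: orthogonal_def)
  \<comment> \<open>the component of \<open>x\<close> orthogonal to \<open>S\<close> has zero derivative\<close>
  have "\<exists>c. \<forall>s\<in>{0..}. q \<bullet> x s = c"
  proof (rule has_derivative_zero_constant)
    fix s :: real assume "s \<in> {0..}"
    then have "((\<lambda>s. q \<bullet> x s) has_derivative (\<lambda>h. q \<bullet> (h *\<^sub>R v s))) (at s within {0..})"
      using x' unfolding has_vector_derivative_def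
      by (intro bounded_linear.has_derivative[OF bounded_linear_inner_right]) auto
    with \<open>s \<in> {0..}\<close> show "((\<lambda>s. q \<bullet> x s) has_derivative (\<lambda>h. 0)) (at s within {0..})"
      using q v by simp
  qed simp
  then have "q \<bullet> x t = q \<bullet> x 0" using t by fastforce
  then have "q \<bullet> q = 0" using q[OF x0] q[OF y] xt by (simp add: inner_add_right)
  then show ?thesis using xt y by simp
qed

lemma mvt_within_nonneg_reals:
  fixes V V' :: "real \<Rightarrow> real"
  assumes V': "\<And>t. 0 \<le> t \<Longrightarrow> (V has_real_derivative V' t) (at t within {0..})"
    and st: "0 \<le> s" "s \<le> t"
  shows "\<exists>\<xi>\<in>{s..t}. V t - V s = V' \<xi> * (t - s)"
proof -
  have "(V has_derivative (*) (V' r)) (at r within {s..t})" if "s \<le> r" "r \<le> t" for r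
  proof -
    have "{s..t} \<subseteq> {0..}" using st by auto
    with V'[of r] that st show ?thesis
      unfolding has_field_derivative_def by (simp add: has_derivative_subset)
  qed
  from mvt_very_simple[OF \<open>s \<le> t\<close> this] show ?thesis by simp
qed

lemma nonincreasing_of_deriv_nonpos:
  fixes V V' :: "real \<Rightarrow> real"
  assumes V': "\<And>t. 0 \<le> t \<Longrightarrow> (V has_real_derivative V' t) (at t within {0..})"
    and nonpos: "\<And>t. 0 \<le> t \<Longrightarrow> V' t \<le> 0"
    and st: "0 \<le> s" "s \<le> t"
  shows "V t \<le> V s"
proof -
  obtain \<xi> where "\<xi> \<in> {s..t}" "V t - V s = V' \<xi> * (t - s)"
    using mvt_within_nonneg_reals[OF V' st] by blast
  moreover have "V' \<xi> * (t - s) \<le> 0"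
    using nonpos[of \<xi>] \<open>\<xi> \<in> {s..t}\<close> st by (simp add: mult_nonpos_nonneg)
  ultimately show ?thesis by simp
qed

lemma lipschitz_on_of_vector_derivative_bound:
  fixes x :: "real \<Rightarrow> 'a::real_normed_vector"
  assumes S: "convex S"
    and x': "\<And>t. t \<in> S \<Longrightarrow> (x has_vector_derivative v t) (at t within S)"
    and bound: "\<And>t. t \<in> S \<Longrightarrow> norm (v t) \<le> C" and "0 \<le> C"
  shows "C-lipschitz_on S x"
proof (rule lipschitz_onI)
  fix s t assume "s \<in> S" "t \<in> S"
  with x' bound show "dist (x s) (x t) \<le> C * dist s t"
    unfolding dist_norm has_vector_derivative_def
    by (intro differentiable_bound[where f' = "\<lambda>t h. h *\<^sub>R v t", OF S])
      (auto simp: onorm_scaleR_left[OF bounded_linear_ident] onorm_id)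
qed fact

lemma lyapunov_descent_tendsto_zero:
  fixes V :: "real \<Rightarrow> real" and g :: "real \<Rightarrow> 'a::real_normed_vector"
  assumes V': "\<And>t. 0 \<le> t \<Longrightarrow> (V has_real_derivative - (norm (g t))\<^sup>2) (at t within {0..})"
    and bdd: "bdd_below (V ` {0..})"
    and uc: "uniformly_continuous_on {0..} g"
  shows "(g \<longlongrightarrow> 0) at_top"
proof -
  have antimono: "V t \<le> V s" if "0 \<le> s" "s \<le> t" for s t
    using nonincreasing_of_deriv_nonpos[OF V' _ that] by simp
  define c where "c = Inf (V ` {0..})"
  have c: "c \<le> V t" if "0 \<le> t" for t
    unfolding c_def using that by (intro cInf_lower bdd) auto
  show ?thesis
    unfolding tendsto_iff eventually_at_top_linorder dist_norm diff_zero
  proof (intro allI impI)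
    fix \<epsilon> :: real assume "0 < \<epsilon>"
    then obtain \<delta> where "0 < \<delta>"
      and \<delta>: "\<And>s t. s \<in> {0..} \<Longrightarrow> t \<in> {0..} \<Longrightarrow> dist t s < \<delta> \<Longrightarrow> dist (g t) (g s) < \<epsilon> / 2"
      using uniformly_continuous_onE[OF uc, of "\<epsilon> / 2"] by auto
    define h \<eta> where "h = \<delta> / 2" and "\<eta> = h * (\<epsilon> / 2)\<^sup>2"
    have "0 < \<eta>" using \<open>0 < \<delta>\<close> \<open>0 < \<epsilon>\<close> by (simp add: h_def \<eta>_def)
    then have "Inf (V ` {0..}) < c + \<eta>" by (simp add: c_def)
    then obtain T where "0 \<le> T" and T: "V T < c + \<eta>"
      using cInf_lessD[of "V ` {0..}" "c + \<eta>"] by auto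
    \<comment> \<open>a large value of \<open>g\<close> at time \<open>t\<close> persists on \<open>[t, t + h]\<close> and pushes \<open>V\<close> below its infimum\<close>
    have "norm (g t) < \<epsilon>" if "T \<le> t" for t
    proof (rule ccontr)
      assume "\<not> norm (g t) < \<epsilon>"
      have "0 \<le> t" using \<open>0 \<le> T\<close> that by simp
      have "t \<le> t + h" using \<open>0 < \<delta>\<close> by (simp add: h_def)
      then obtain \<xi> where \<xi>: "\<xi> \<in> {t..t + h}" and V_drop: "V (t + h) - V t = - (norm (g \<xi>))\<^sup>2 * h"
        using mvt_within_nonneg_reals[OF V' \<open>0 \<le> t\<close> \<open>t \<le> t + h\<close>] by auto
      have "dist \<xi> t < \<delta>" using \<xi> \<open>0 < \<delta>\<close> by (simp add: h_def dist_real_def)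
      then have "dist (g \<xi>) (g t) < \<epsilon> / 2" using \<delta>[of t \<xi>] \<xi> \<open>0 \<le> t\<close> by simp
      then have "\<epsilon> / 2 \<le> norm (g \<xi>)"
        using \<open>\<not> norm (g t) < \<epsilon>\<close> norm_triangle_ineq2[of "g t" "g \<xi>"]
        by (simp add: dist_norm norm_minus_commute)
      then have "(\<epsilon> / 2)\<^sup>2 \<le> (norm (g \<xi>))\<^sup>2" using \<open>0 < \<epsilon>\<close> by (simp add: power_mono)
      then have "\<eta> \<le> (norm (g \<xi>))\<^sup>2 * h"
        using \<open>0 < \<delta>\<close> unfolding \<eta>_def h_def by (simp add: mult.commute)
      then have "V (t + h) < c"
        using V_drop antimono[OF \<open>0 \<le> T\<close> that] T by linarith
      then show False using c[of "t + h"] \<open>0 \<le> t\<close> \<open>t \<le> t + h\<close> by simp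
    qed
    then show "\<exists>T. \<forall>t\<ge>T. norm (g t) < \<epsilon>" by auto
  qed
qed

lemma infdist_tendsto_zero_of_compact_trajectory:
  fixes z :: "real \<Rightarrow> 'a::metric_space" and f :: "'a \<Rightarrow> 'b::real_normed_vector"
  assumes K: "compact K" and zK: "\<And>t. 0 \<le> t \<Longrightarrow> z t \<in> K"
    and f: "continuous_on K f" and lim: "((\<lambda>t. f (z t)) \<longlongrightarrow> 0) at_top"
    and M: "{w\<in>K. f w = 0} \<subseteq> M"
  shows "M \<noteq> {} \<and> ((\<lambda>t. infdist (z t) M) \<longlongrightarrow> 0) at_top"
proof -
  have limit_point: "\<exists>r w. (\<lambda>n. z (T (r n))) \<longlonglongrightarrow> w \<and> w \<in> M"
    if T0: "\<And>n. 0 \<le> T n" and T: "filterlim T at_top sequentially" for T :: "nat \<Rightarrow> real"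
  proof -
    have "\<forall>n. z (T n) \<in> K" using zK T0 by blast
    then obtain w r where w: "w \<in> K" and r: "strict_mono r" and "((\<lambda>n. z (T n)) \<circ> r) \<longlonglongrightarrow> w"
      using seq_compactE[OF compact_imp_seq_compact[OF K]] by metis
    then have zr: "(\<lambda>n. z (T (r n))) \<longlonglongrightarrow> w" by (simp add: o_def)
    have "(\<lambda>n. f (z (T (r n)))) \<longlonglongrightarrow> f w"
      using continuous_on_tendsto_compose[OF f zr w] zK T0 by simp
    moreover have "(\<lambda>n. f (z (T (r n)))) \<longlonglongrightarrow> 0"
      using filterlim_compose[OF lim filterlim_compose[OF T filterlim_subseq[OF r]]] .
    ultimately have "f w = 0" by (rule LIMSEQ_unique)
    then show ?thesis using zr w M by blast
  qed
  have "M \<noteq> {}"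
    using limit_point[of real, OF of_nat_0_le_iff filterlim_real_sequentially] by blast
  moreover have "((\<lambda>t. infdist (z t) M) \<longlongrightarrow> 0) at_top"
  proof (rule tendstoI, rule ccontr)
    fix \<epsilon> :: real assume "0 < \<epsilon>" "\<not> (\<forall>\<^sub>F t in at_top. dist (infdist (z t) M) 0 < \<epsilon>)"
    then have "\<forall>n::nat. \<exists>t\<ge>real n. \<epsilon> \<le> infdist (z t) M"
      unfolding eventually_at_top_linorder by (auto simp: infdist_nonneg not_less)
    then obtain T where T: "\<And>n. real n \<le> T n" "\<And>n. \<epsilon> \<le> infdist (z (T n)) M" by metis
    have T0: "0 \<le> T n" for n using T(1)[of n] of_nat_0_le_iff order_trans by blast
    have "filterlim T at_top sequentially"
      by (rule filterlim_at_top_mono[OF filterlim_real_sequentially]) (use T in auto)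
    then obtain r w where lim: "(\<lambda>n. z (T (r n))) \<longlonglongrightarrow> w" and "w \<in> M"
      using limit_point[of T] T0 by blast
    have "\<forall>\<^sub>F n in sequentially. dist (z (T (r n))) w < \<epsilon>"
      using tendstoD[OF lim \<open>0 < \<epsilon>\<close>] .
    then obtain n where "dist (z (T (r n))) w < \<epsilon>"
      using eventually_sequentially by auto
    then show False using T(2)[of "r n"] infdist_le[OF \<open>w \<in> M\<close>, of "z (T (r n))"] by linarith
  qed
  ultimately show ?thesis ..
qed

section \<open>Incidence sums and the closed-loop field\<close>

lemma sum_signed_edges_eq_sum_nbrs:
  fixes f :: "'n::finite \<Rightarrow> 'n \<Rightarrow> 'a::ab_group_add"
  assumes noloop: "\<forall>(i, j)\<in>E. i \<noteq> j" and orient: "\<forall>(i, j)\<in>E. (j, i) \<notin> E"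
  shows "(\<Sum>k\<in>E. if i = snd k then f (fst k) (snd k) else if i = fst k then - f (fst k) (snd k) else 0)
       = (\<Sum>j\<in>nbrs E i. if (j, i) \<in> E then f j i else - f i j)"
proof -
  let ?In = "E \<inter> {k. snd k = i}" and ?Out = "E \<inter> {k. fst k = i}"
  let ?g = "\<lambda>k. if i = snd k then f (fst k) (snd k) else if i = fst k then - f (fst k) (snd k) else 0"
  have "(\<Sum>k\<in>E. ?g k) = (\<Sum>k\<in>?In \<union> ?Out. ?g k)"
    by (rule sum.mono_neutral_right) auto
  also have "\<dots> = (\<Sum>k\<in>?In. f (fst k) (snd k)) + (\<Sum>k\<in>?Out. - f (fst k) (snd k))"
    using noloop by (subst sum.union_disjoint) (auto intro!: sum.cong arg_cong2[where f = "(+)"])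
  also have "(\<Sum>k\<in>?In. f (fst k) (snd k)) = (\<Sum>j\<in>{j. (j, i) \<in> E}. f j i)"
    by (rule sum.reindex_bij_witness[where i = "\<lambda>j. (j, i)" and j = fst]) auto
  also have "(\<Sum>k\<in>?Out. - f (fst k) (snd k)) = (\<Sum>j\<in>{j. (i, j) \<in> E}. - f i j)"
    by (rule sum.reindex_bij_witness[where i = "\<lambda>j. (i, j)" and j = snd]) auto
  also have "(\<Sum>j\<in>{j. (j, i) \<in> E}. f j i) + (\<Sum>j\<in>{j. (i, j) \<in> E}. - f i j)
      = (\<Sum>j\<in>nbrs E i. if (j, i) \<in> E then f j i else - f i j)"
  proof -
    have "nbrs E i = {j. (j, i) \<in> E} \<union> {j. (i, j) \<in> E}" unfolding nbrs_def by auto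
    moreover have "{j. (j, i) \<in> E} \<inter> {j. (i, j) \<in> E} = {}" using orient by auto
    ultimately show ?thesis
      by (simp add: sum.union_disjoint) (auto intro!: sum.cong arg_cong2[where f = "(+)"])
  qed
  finally show ?thesis .
qed

lemma inner_incidence_sum:
  fixes v :: "'n::finite \<times> 'n \<Rightarrow> 'a::real_inner" and h :: "'a^'n"
  assumes noloop: "\<forall>(i, j)\<in>S. i \<noteq> j"
  shows "(\<chi> i. \<Sum>k\<in>S. inc k i *\<^sub>R v k) \<bullet> h = (\<Sum>k\<in>S. v k \<bullet> (h $ snd k - h $ fst k))"
proof -
  have incidence_h: "(\<Sum>i\<in>UNIV. inc k i *\<^sub>R h $ i) = h $ snd k - h $ fst k" if "k \<in> S" for k
  proof -
    have "(\<Sum>i\<in>UNIV. inc k i *\<^sub>R h $ i)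
        = (\<Sum>i\<in>UNIV. (if i = snd k then h $ i else 0) + (if i = fst k then - h $ i else 0))"
      using noloop that by (intro sum.cong refl) (auto simp: inc_def)
    then show ?thesis by (simp add: sum.distrib)
  qed
  have "(\<chi> i. \<Sum>k\<in>S. inc k i *\<^sub>R v k) \<bullet> h = (\<Sum>i\<in>UNIV. \<Sum>k\<in>S. inc k i * (v k \<bullet> h $ i))"
    unfolding inner_vec_def by (simp add: inner_sum_left)
  also have "\<dots> = (\<Sum>k\<in>S. \<Sum>i\<in>UNIV. inc k i * (v k \<bullet> h $ i))"
    by (rule sum.swap)
  also have "\<dots> = (\<Sum>k\<in>S. v k \<bullet> (\<Sum>i\<in>UNIV. inc k i *\<^sub>R h $ i))"
    by (simp add: inner_sum_right)
  also have "\<dots> = (\<Sum>k\<in>S. v k \<bullet> (h $ snd k - h $ fst k))"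
    by (intro sum.cong refl) (simp add: incidence_h)
  finally show ?thesis .
qed

lemma norm_vec_le_sum_norm_nth: "norm (x :: 'a::real_normed_vector^'n::finite) \<le> (\<Sum>i\<in>UNIV. norm (x $ i))"
  unfolding norm_vec_def by (rule L2_set_le_sum) simp

lemma norm_incidence_sum_le:
  fixes v :: "'n::finite \<times> 'n \<Rightarrow> 'a::real_normed_vector"
  shows "norm (\<chi> i. \<Sum>k\<in>S. inc k i *\<^sub>R v k) \<le> real CARD('n) * (\<Sum>k\<in>S. norm (v k))"
proof -
  have "norm (\<Sum>k\<in>S. inc k i *\<^sub>R v k) \<le> (\<Sum>k\<in>S. norm (v k))" for i
  proof -
    have "norm (\<Sum>k\<in>S. inc k i *\<^sub>R v k) \<le> (\<Sum>k\<in>S. norm (inc k i *\<^sub>R v k))" by (rule norm_sum)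
    also have "\<dots> \<le> (\<Sum>k\<in>S. norm (v k))" by (rule sum_mono) (auto simp: inc_def)
    finally show ?thesis .
  qed
  then have "(\<Sum>i\<in>UNIV. norm (\<Sum>k\<in>S. inc k i *\<^sub>R v k)) \<le> (\<Sum>i\<in>(UNIV::'n set). \<Sum>k\<in>S. norm (v k))"
    by (rule sum_mono)
  then show ?thesis
    using norm_vec_le_sum_norm_nth[of "\<chi> i. \<Sum>k\<in>S. inc k i *\<^sub>R v k"] by simp
qed

lemma zrel_zof:
  assumes "(i, j) \<in> E \<or> (j, i) \<in> E" and "\<forall>(i, j)\<in>E. (j, i) \<notin> E"
  shows "zrel E (zof E p) i j = p $ j - p $ i"
  using assms unfolding zrel_def zof_def by auto

lemma lapbar_nth:
  "lapbar Eo ph p $ i = (\<Sum>j\<in>nbrs Eo i. (ph j - ph i) - (p $ j - p $ i))"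
proof -
  have "orient_agent Eo i" "orient_agent Eo j" if "j \<in> nbrs Eo i" for j
    using that unfolding nbrs_def orient_agent_def by auto
  then show ?thesis
    unfolding lapbar_def by (auto simp: pbar_def algebra_simps intro!: sum.cong)
qed

lemma lapbar_eq_lap_z:
  assumes EoE: "Eo \<subseteq> E" and orient: "\<forall>(i, j)\<in>E. (j, i) \<notin> E"
  shows "lapbar Eo ph p = lap_z E Eo ph (zof E p)"
proof -
  have "zrel E (zof E p) i j = p $ j - p $ i" if "j \<in> nbrs Eo i" for i j
    using that EoE orient by (intro zrel_zof) (auto simp: nbrs_def)
  then show ?thesis
    unfolding lap_z_def by (simp add: vec_eq_iff lapbar_nth)
qed

lemma rigTe_zof_nth:
  assumes noloop: "\<forall>(i, j)\<in>E. i \<noteq> j" and orient: "\<forall>(i, j)\<in>E. (j, i) \<notin> E"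
    and dsym: "\<forall>(i, j)\<in>E. d j i = d i j"
  shows "rigTe E d (zof E p) $ i =
     - (\<Sum>j\<in>nbrs E i. ((norm (p $ j - p $ i))\<^sup>2 - (d i j)\<^sup>2) *\<^sub>R (p $ j - p $ i))"
proof -
  define F where "F a b = ((norm (p $ b - p $ a))\<^sup>2 - (d a b)\<^sup>2) *\<^sub>R (p $ b - p $ a)" for a b
  have "rigTe E d (zof E p) $ i
      = (\<Sum>k\<in>E. if i = snd k then F (fst k) (snd k) else if i = fst k then - F (fst k) (snd k) else 0)"
    unfolding rigTe_def vec_lambda_beta
    by (intro sum.cong refl) (auto simp: zof_def inc_def F_def scaleR_left_diff_distrib)
  also have "\<dots> = (\<Sum>j\<in>nbrs E i. if (j, i) \<in> E then F j i else - F i j)"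
    by (rule sum_signed_edges_eq_sum_nbrs[OF noloop orient])
  also have "\<dots> = (\<Sum>j\<in>nbrs E i. - F i j)"
  proof (intro sum.cong refl)
    fix j
    \<comment> \<open>the edge term is odd under exchanging its endpoints, because \<open>d\<close> is symmetric on edges\<close>
    have "F j i = - F i j" if "(j, i) \<in> E"
      using that dsym norm_minus_commute[of "p $ i" "p $ j"] unfolding F_def by (auto simp: algebra_simps)
    then show "(if (j, i) \<in> E then F j i else - F i j) = - F i j" by simp
  qed
  finally show ?thesis unfolding F_def by (simp add: sum_negf)
qed

lemma closed_loop_nth:
  assumes noloop: "\<forall>(i, j)\<in>E. i \<noteq> j" and orient: "\<forall>(i, j)\<in>E. (j, i) \<notin> E"
    and dsym: "\<forall>(i, j)\<in>E. d j i = d i j"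
  shows "closed_loop E Eo d ph p $ i =
        (\<Sum>j\<in>nbrs E i. ((norm (p $ j - p $ i))\<^sup>2 - (d i j)\<^sup>2) *\<^sub>R (p $ j - p $ i))
      + (\<Sum>j\<in>nbrs Eo i. (p $ j - p $ i) - (ph j - ph i))"
proof -
  have "(\<Sum>j\<in>nbrs Eo i. (p $ j - p $ i) - (ph j - ph i)) = - lapbar Eo ph p $ i"
    by (simp add: lapbar_nth sum_negf[symmetric] algebra_simps)
  then show ?thesis
    unfolding closed_loop_def by (simp add: rigTe_zof_nth[OF noloop orient dsym])
qed

lemma lap_z_eq_incidence_sum:
  assumes EoE: "Eo \<subseteq> E" and noloop: "\<forall>(i, j)\<in>E. i \<noteq> j" and orient: "\<forall>(i, j)\<in>E. (j, i) \<notin> E"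
  shows "lap_z E Eo ph w = (\<chi> i. \<Sum>k\<in>Eo. inc k i *\<^sub>R (w $ k - (ph (snd k) - ph (fst k))))"
proof -
  have noloop_o: "\<forall>(i, j)\<in>Eo. i \<noteq> j" and orient_o: "\<forall>(i, j)\<in>Eo. (j, i) \<notin> Eo"
    using EoE noloop orient by fast+
  have "(\<Sum>k\<in>Eo. inc k i *\<^sub>R (w $ k - (ph (snd k) - ph (fst k))))
      = (\<Sum>j\<in>nbrs Eo i. (ph j - ph i) - zrel E w i j)" for i
  proof -
    define f where "f a b = w $ (a, b) - (ph b - ph a)" for a b
    have "(\<Sum>k\<in>Eo. inc k i *\<^sub>R (w $ k - (ph (snd k) - ph (fst k))))
      = (\<Sum>k\<in>Eo. if i = snd k then f (fst k) (snd k) else if i = fst k then - f (fst k) (snd k) else 0)"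
      by (intro sum.cong refl) (auto simp: inc_def f_def)
    also have "\<dots> = (\<Sum>j\<in>nbrs Eo i. if (j, i) \<in> Eo then f j i else - f i j)"
      by (rule sum_signed_edges_eq_sum_nbrs[OF noloop_o orient_o])
    also have "\<dots> = (\<Sum>j\<in>nbrs Eo i. (ph j - ph i) - zrel E w i j)"
    proof (intro sum.cong refl)
      fix j assume "j \<in> nbrs Eo i"
      then consider "(j, i) \<in> Eo" "(i, j) \<notin> E" | "(j, i) \<notin> Eo" "(i, j) \<in> E"
        using EoE orient unfolding nbrs_def by auto
      then show "(if (j, i) \<in> Eo then f j i else - f i j) = (ph j - ph i) - zrel E w i j"
        by cases (simp_all add: f_def zrel_def algebra_simps)
    qed
    finally show ?thesis .
  qed
  then show ?thesis unfolding lap_z_def by (simp add: vec_eq_iff)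
qed

section \<open>The closed loop in relative coordinates\<close>

definition field_z :: "('n::finite \<times> 'n) set \<Rightarrow> ('n \<times> 'n) set \<Rightarrow> ('n \<Rightarrow> 'n \<Rightarrow> real) \<Rightarrow> ('n \<Rightarrow> real^'d)
    \<Rightarrow> (real^'d)^('n \<times> 'n) \<Rightarrow> (real^'d)^'n" where
  "field_z E Eo d ph w = - (rigTe E d w + lap_z E Eo ph w)"

definition potential_z :: "('n::finite \<times> 'n) set \<Rightarrow> ('n \<times> 'n) set \<Rightarrow> ('n \<Rightarrow> 'n \<Rightarrow> real) \<Rightarrow> ('n \<Rightarrow> real^'d)
    \<Rightarrow> (real^'d)^('n \<times> 'n) \<Rightarrow> real" where
  "potential_z E Eo d ph w =
     1/4 * (\<Sum>k\<in>E. ((norm (w $ k))\<^sup>2 - (d (fst k) (snd k))\<^sup>2)\<^sup>2)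
   + 1/2 * (\<Sum>k\<in>Eo. (norm (w $ k - (ph (snd k) - ph (fst k))))\<^sup>2)"

definition potential_z_deriv :: "('n::finite \<times> 'n) set \<Rightarrow> ('n \<times> 'n) set \<Rightarrow> ('n \<Rightarrow> 'n \<Rightarrow> real)
    \<Rightarrow> ('n \<Rightarrow> real^'d) \<Rightarrow> (real^'d)^('n \<times> 'n) \<Rightarrow> (real^'d)^('n \<times> 'n) \<Rightarrow> real" where
  "potential_z_deriv E Eo d ph w h =
     (\<Sum>k\<in>E. (((norm (w $ k))\<^sup>2 - (d (fst k) (snd k))\<^sup>2) *\<^sub>R w $ k) \<bullet> h $ k)
   + (\<Sum>k\<in>Eo. (w $ k - (ph (snd k) - ph (fst k))) \<bullet> h $ k)"

lemma linear_zof: "linear (zof E)"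
  by (rule linearI) (auto simp: zof_def vec_eq_iff algebra_simps)

lemma bounded_linear_zof: "bounded_linear (zof E)"
  using linear_zof linear_conv_bounded_linear by blast

lemma subspace_range_zof: "subspace (range (zof E))"
  using linear_subspace_image[OF linear_zof subspace_UNIV] .

lemma closed_loop_eq_field_z:
  assumes "Eo \<subseteq> E" and "\<forall>(i, j)\<in>E. (j, i) \<notin> E"
  shows "closed_loop E Eo d ph p = field_z E Eo d ph (zof E p)"
  unfolding closed_loop_def field_z_def using lapbar_eq_lap_z[OF assms] by simp

text \<open>Off the range of \<open>zof E\<close>, \<open>zdyn\<close> is determined by an unspecified \<open>SOME\<close>-choice;
  this is why everything about the \<open>z\<close>-dynamics is relativised to that range.\<close>

lemma zdyn_eq_zof_field_z:
  assumes EoE: "Eo \<subseteq> E" and orient: "\<forall>(i, j)\<in>E. (j, i) \<notin> E" and w: "w \<in> range (zof E)"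
  shows "zdyn E Eo d ph w = zof E (field_z E Eo d ph w)"
proof -
  have "zof E (SOME p. zof E p = w) = w" using w by (auto intro: someI)
  then show ?thesis unfolding zdyn_def closed_loop_eq_field_z[OF EoE orient] by simp
qed

lemma potential_eq_potential_z:
  assumes EoE: "Eo \<subseteq> E"
  shows "potential E Eo d ph p = potential_z E Eo d ph (zof E p)"
proof -
  have "(\<Sum>(i, j)\<in>E. ((norm (p $ i - p $ j))\<^sup>2 - (d i j)\<^sup>2)\<^sup>2)
      = (\<Sum>k\<in>E. ((norm (zof E p $ k))\<^sup>2 - (d (fst k) (snd k))\<^sup>2)\<^sup>2)"
    by (intro sum.cong refl) (auto simp: zof_def norm_minus_commute)
  moreover have "(\<Sum>(i, j)\<in>Eo. (norm ((p $ j - p $ i) - (ph j - ph i)))\<^sup>2)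
      = (\<Sum>k\<in>Eo. (norm (zof E p $ k - (ph (snd k) - ph (fst k))))\<^sup>2)"
    using EoE by (intro sum.cong refl) (auto simp: zof_def)
  ultimately show ?thesis unfolding potential_def potential_z_def by simp
qed

lemma potential_z_has_derivative:
  "(potential_z E Eo d ph has_derivative potential_z_deriv E Eo d ph w) (at w)"
proof -
  have dist_term: "((\<lambda>x. ((norm (x $ k))\<^sup>2 - c)\<^sup>2) has_derivative
      (\<lambda>h. 4 * ((((norm (w $ k))\<^sup>2 - c) *\<^sub>R w $ k) \<bullet> h $ k))) (at w)" for k c
    unfolding power2_norm_eq_inner
    by (rule has_derivative_eq_rhs, (rule derivative_eq_intros refl bounded_linear_vec_nth
          bounded_linear_imp_has_derivative)+) (auto simp: fun_eq_iff inner_commute algebra_simps)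
  have orient_term: "((\<lambda>x. (norm (x $ k - c))\<^sup>2) has_derivative
      (\<lambda>h. 2 * ((w $ k - c) \<bullet> h $ k))) (at w)" for k c
    unfolding power2_norm_eq_inner
    by (rule has_derivative_eq_rhs, (rule derivative_eq_intros refl bounded_linear_vec_nth
          bounded_linear_imp_has_derivative)+) (auto simp: fun_eq_iff inner_commute algebra_simps)
  have "(potential_z E Eo d ph has_derivative
     (\<lambda>h. 1/4 * (\<Sum>k\<in>E. 4 * ((((norm (w $ k))\<^sup>2 - (d (fst k) (snd k))\<^sup>2) *\<^sub>R w $ k) \<bullet> h $ k))
        + 1/2 * (\<Sum>k\<in>Eo. 2 * ((w $ k - (ph (snd k) - ph (fst k))) \<bullet> h $ k)))) (at w)"
    unfolding potential_z_def[abs_def]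
    by (intro has_derivative_add has_derivative_mult_right has_derivative_sum dist_term orient_term)
  then show ?thesis
    unfolding potential_z_deriv_def[abs_def] by (simp flip: sum_distrib_left)
qed

lemma potential_z_deriv_zof:
  assumes EoE: "Eo \<subseteq> E" and noloop: "\<forall>(i, j)\<in>E. i \<noteq> j" and orient: "\<forall>(i, j)\<in>E. (j, i) \<notin> E"
  shows "potential_z_deriv E Eo d ph w (zof E h) = - (field_z E Eo d ph w \<bullet> h)"
proof -
  have noloop_o: "\<forall>(i, j)\<in>Eo. i \<noteq> j" using EoE noloop by auto
  have "potential_z_deriv E Eo d ph w (zof E h)
      = (\<Sum>k\<in>E. (((norm (w $ k))\<^sup>2 - (d (fst k) (snd k))\<^sup>2) *\<^sub>R w $ k) \<bullet> (h $ snd k - h $ fst k))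
      + (\<Sum>k\<in>Eo. (w $ k - (ph (snd k) - ph (fst k))) \<bullet> (h $ snd k - h $ fst k))"
    unfolding potential_z_deriv_def using EoE
    by (auto simp: zof_def intro!: sum.cong arg_cong2[where f = "(+)"])
  also have "\<dots> = (rigTe E d w + lap_z E Eo ph w) \<bullet> h"
  proof -
    have rigTe_w: "rigTe E d w
        = (\<chi> i. \<Sum>k\<in>E. inc k i *\<^sub>R (((norm (w $ k))\<^sup>2 - (d (fst k) (snd k))\<^sup>2) *\<^sub>R w $ k))"
      unfolding rigTe_def by simp
    show ?thesis
      unfolding inner_add_left rigTe_w lap_z_eq_incidence_sum[OF EoE noloop orient]
        inner_incidence_sum[OF noloop] inner_incidence_sum[OF noloop_o] by simp
  qed
  finally show ?thesis unfolding field_z_def by (simp add: inner_diff_left inner_add_left)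
qed

lemma potential_has_derivative:
  assumes EoE: "Eo \<subseteq> E" and noloop: "\<forall>(i, j)\<in>E. i \<noteq> j" and orient: "\<forall>(i, j)\<in>E. (j, i) \<notin> E"
  shows "(potential E Eo d ph has_derivative (\<lambda>h. (- closed_loop E Eo d ph p) \<bullet> h)) (at p)"
proof -
  have "potential E Eo d ph = potential_z E Eo d ph \<circ> zof E"
    using potential_eq_potential_z[OF EoE] by (auto simp: fun_eq_iff)
  moreover have "potential_z_deriv E Eo d ph (zof E p) \<circ> zof E = (\<lambda>h. (- closed_loop E Eo d ph p) \<bullet> h)"
    by (simp add: fun_eq_iff potential_z_deriv_zof[OF EoE noloop orient]
        closed_loop_eq_field_z[OF EoE orient])
  ultimately show ?thesis
    using diff_chain_at[OF bounded_linear_imp_has_derivative[OF bounded_linear_zof]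
        potential_z_has_derivative] by metis
qed

lemma potential_along_closed_loop:
  assumes EoE: "Eo \<subseteq> E" and noloop: "\<forall>(i, j)\<in>E. i \<noteq> j" and orient: "\<forall>(i, j)\<in>E. (j, i) \<notin> E"
    and p': "(p has_vector_derivative closed_loop E Eo d ph (p t)) (at t)"
  shows "((\<lambda>s. potential E Eo d ph (p s)) has_real_derivative
            - (norm (rigTe E d (zof E (p t)) + lapbar Eo ph (p t)))\<^sup>2) (at t)"
proof -
  let ?c = "closed_loop E Eo d ph (p t)"
  have "((potential E Eo d ph \<circ> p) has_derivative ((\<lambda>h. (- ?c) \<bullet> h) \<circ> (\<lambda>s. s *\<^sub>R ?c))) (at t)"
    using p' unfolding has_vector_derivative_def
    by (rule diff_chain_at[OF _ potential_has_derivative[OF EoE noloop orient]])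
  moreover have "(\<lambda>h. (- ?c) \<bullet> h) \<circ> (\<lambda>s. s *\<^sub>R ?c)
      = (*) (- (norm (rigTe E d (zof E (p t)) + lapbar Eo ph (p t)))\<^sup>2)"
    unfolding closed_loop_def by (auto simp: fun_eq_iff power2_norm_eq_inner algebra_simps)
  ultimately show ?thesis unfolding has_field_derivative_def comp_def by simp
qed

lemma potential_z_along_zdyn:
  fixes z :: "real \<Rightarrow> (real^'d)^('n::finite \<times> 'n)"
  assumes EoE: "Eo \<subseteq> E" and noloop: "\<forall>(i, j)\<in>E. i \<noteq> j" and orient: "\<forall>(i, j)\<in>E. (j, i) \<notin> E"
    and zt: "z t \<in> range (zof E)"
    and z': "(z has_vector_derivative zdyn E Eo d ph (z t)) (at t within S)"
  shows "((\<lambda>s. potential_z E Eo d ph (z s)) has_real_derivative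
            - (norm (field_z E Eo d ph (z t)))\<^sup>2) (at t within S)"
proof -
  let ?G = "field_z E Eo d ph (z t)"
  have "(z has_derivative (\<lambda>h. h *\<^sub>R zof E ?G)) (at t within S)"
    using z' zdyn_eq_zof_field_z[OF EoE orient zt] unfolding has_vector_derivative_def by simp
  from diff_chain_within[OF this has_derivative_at_withinI[OF potential_z_has_derivative]]
  have "((potential_z E Eo d ph \<circ> z) has_derivative
      (\<lambda>h. potential_z_deriv E Eo d ph (z t) (zof E (h *\<^sub>R ?G)))) (at t within S)"
    by (simp add: comp_def linear_scale[OF linear_zof])
  moreover have "(\<lambda>h. potential_z_deriv E Eo d ph (z t) (zof E (h *\<^sub>R ?G))) = (*) (- (norm ?G)\<^sup>2)"
    by (simp add: fun_eq_iff potential_z_deriv_zof[OF EoE noloop orient] power2_norm_eq_inner)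
  ultimately show ?thesis unfolding has_field_derivative_def by (simp only: comp_def)
qed

section \<open>Boundedness and Lipschitz estimates\<close>

lemma potential_z_nonneg: "0 \<le> potential_z E Eo d ph w"
  unfolding potential_z_def by (intro add_nonneg_nonneg mult_nonneg_nonneg sum_nonneg) auto

lemma norm_le_of_potential_z_le:
  assumes w: "w \<in> range (zof E)" and V: "potential_z E Eo d ph w \<le> V0"
  shows "norm w \<le> (\<Sum>k\<in>E. 2 + (d (fst k) (snd k))\<^sup>2 + 4 * V0)"
proof -
  have le_1_plus_sq: "x \<le> 1 + x\<^sup>2" for x :: real
    using zero_le_power2[of "x - 1/2"] by (simp add: power2_eq_square algebra_simps)
  have nth_bound: "norm (w $ k) \<le> 2 + (d (fst k) (snd k))\<^sup>2 + 4 * V0" if "k \<in> E" for k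
  proof -
    define q where "q = (norm (w $ k))\<^sup>2 - (d (fst k) (snd k))\<^sup>2"
    have "q\<^sup>2 \<le> (\<Sum>k\<in>E. ((norm (w $ k))\<^sup>2 - (d (fst k) (snd k))\<^sup>2)\<^sup>2)"
      unfolding q_def using that by (intro member_le_sum) auto
    moreover have "0 \<le> (\<Sum>k\<in>Eo. (norm (w $ k - (ph (snd k) - ph (fst k))))\<^sup>2)"
      by (rule sum_nonneg) simp
    ultimately have "q\<^sup>2 \<le> 4 * V0" using V unfolding potential_z_def by linarith
    then show ?thesis
      using le_1_plus_sq[of q] le_1_plus_sq[of "norm (w $ k)"] unfolding q_def by linarith
  qed
  have "w $ k = 0" if "k \<notin> E" for k using w that by (auto simp: zof_def)
  then have "(\<Sum>k\<in>UNIV. norm (w $ k)) = (\<Sum>k\<in>E. norm (w $ k))"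
    by (intro sum.mono_neutral_right) auto
  also have "\<dots> \<le> (\<Sum>k\<in>E. 2 + (d (fst k) (snd k))\<^sup>2 + 4 * V0)"
    by (rule sum_mono) (rule nth_bound)
  finally show ?thesis using norm_vec_le_sum_norm_nth[of w] by linarith
qed

lemma norm_cubic_diff_le:
  fixes u v :: "'a::real_normed_vector"
  assumes u: "norm u \<le> B" and v: "norm v \<le> B"
  shows "norm (((norm u)\<^sup>2 - c) *\<^sub>R u - ((norm v)\<^sup>2 - c) *\<^sub>R v) \<le> (3 * B\<^sup>2 + \<bar>c\<bar>) * norm (u - v)"
proof -
  have B0: "0 \<le> B" using u norm_ge_zero order_trans by blast
  have split: "((norm u)\<^sup>2 - c) *\<^sub>R u - ((norm v)\<^sup>2 - c) *\<^sub>R v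
      = ((norm u)\<^sup>2 - c) *\<^sub>R (u - v) + ((norm u)\<^sup>2 - (norm v)\<^sup>2) *\<^sub>R v"
    by (simp add: algebra_simps)
  have first: "\<bar>(norm u)\<^sup>2 - c\<bar> \<le> B\<^sup>2 + \<bar>c\<bar>"
    unfolding abs_le_iff using power_mono[OF u norm_ge_zero, of 2] zero_le_power2[of "norm u"]
      abs_ge_self[of c] abs_ge_minus_self[of c] by linarith
  have "(norm u)\<^sup>2 - (norm v)\<^sup>2 = (norm u - norm v) * (norm u + norm v)"
    by (simp add: power2_eq_square algebra_simps)
  then have "\<bar>(norm u)\<^sup>2 - (norm v)\<^sup>2\<bar> = \<bar>norm u - norm v\<bar> * (norm u + norm v)"
    by (simp add: abs_mult)
  also have "\<dots> \<le> norm (u - v) * (2 * B)"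
    by (rule mult_mono) (use u v norm_triangle_ineq3[of u v] in auto)
  finally have second: "\<bar>(norm u)\<^sup>2 - (norm v)\<^sup>2\<bar> \<le> 2 * B * norm (u - v)" by (simp add: mult_ac)
  have "norm (((norm u)\<^sup>2 - c) *\<^sub>R u - ((norm v)\<^sup>2 - c) *\<^sub>R v)
     \<le> \<bar>(norm u)\<^sup>2 - c\<bar> * norm (u - v) + \<bar>(norm u)\<^sup>2 - (norm v)\<^sup>2\<bar> * norm v"
    unfolding split by (rule order_trans[OF norm_triangle_ineq]) simp
  also have "\<dots> \<le> (B\<^sup>2 + \<bar>c\<bar>) * norm (u - v) + (2 * B * norm (u - v)) * B"
    by (intro add_mono mult_mono first second v) (use B0 in auto)
  also have "\<dots> = (3 * B\<^sup>2 + \<bar>c\<bar>) * norm (u - v)" by (simp add: algebra_simps power2_eq_square)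
  finally show ?thesis .
qed

lemma rigTe_lipschitz_on_cball:
  "(real CARD('n) * (\<Sum>k\<in>E. 3 * B\<^sup>2 + (d (fst k) (snd k))\<^sup>2))-lipschitz_on
      (cball 0 B) (rigTe E d :: (real^'d)^('n::finite \<times> 'n) \<Rightarrow> _)"
proof (rule lipschitz_onI)
  fix x y :: "(real^'d)^('n \<times> 'n)" assume "x \<in> cball 0 B" "y \<in> cball 0 B"
  then have x: "norm x \<le> B" and y: "norm y \<le> B" by auto
  define a where "a w k = ((norm (w $ k))\<^sup>2 - (d (fst k) (snd k))\<^sup>2) *\<^sub>R w $ k"
    for w :: "(real^'d)^('n \<times> 'n)" and k
  have "rigTe E d x - rigTe E d y = (\<chi> i. \<Sum>k\<in>E. inc k i *\<^sub>R (a x k - a y k))"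
    unfolding rigTe_def a_def by (simp add: vec_eq_iff sum_subtractf[symmetric] scaleR_diff_right)
  then have "dist (rigTe E d x) (rigTe E d y) \<le> real CARD('n) * (\<Sum>k\<in>E. norm (a x k - a y k))"
    using norm_incidence_sum_le[of "\<lambda>k. a x k - a y k" E] by (simp add: dist_norm)
  also have "\<dots> \<le> real CARD('n) * (\<Sum>k\<in>E. (3 * B\<^sup>2 + (d (fst k) (snd k))\<^sup>2) * norm (x - y))"
  proof (rule mult_left_mono[OF sum_mono])
    fix k
    have "norm (x $ k) \<le> B" "norm (y $ k) \<le> B"
      using x y Finite_Cartesian_Product.norm_nth_le order_trans by blast+
    from norm_cubic_diff_le[OF this, of "(d (fst k) (snd k))\<^sup>2"]
    have "norm (a x k - a y k) \<le> (3 * B\<^sup>2 + (d (fst k) (snd k))\<^sup>2) * norm (x $ k - y $ k)"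
      unfolding a_def by simp
    also have "\<dots> \<le> (3 * B\<^sup>2 + (d (fst k) (snd k))\<^sup>2) * norm (x - y)"
      using Finite_Cartesian_Product.norm_nth_le[of "x - y" k] by (intro mult_left_mono) auto
    finally show "norm (a x k - a y k) \<le> (3 * B\<^sup>2 + (d (fst k) (snd k))\<^sup>2) * norm (x - y)" .
  qed simp
  finally show "dist (rigTe E d x) (rigTe E d y)
      \<le> real CARD('n) * (\<Sum>k\<in>E. 3 * B\<^sup>2 + (d (fst k) (snd k))\<^sup>2) * dist x y"
    by (simp add: dist_norm sum_distrib_right mult.assoc)
qed (simp add: sum_nonneg)

lemma lap_z_lipschitz:
  assumes EoE: "Eo \<subseteq> E" and noloop: "\<forall>(i, j)\<in>E. i \<noteq> j" and orient: "\<forall>(i, j)\<in>E. (j, i) \<notin> E"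
  shows "(real CARD('n) * real (card Eo))-lipschitz_on UNIV
      (lap_z E Eo ph :: (real^'d)^('n::finite \<times> 'n) \<Rightarrow> _)"
proof (rule lipschitz_onI)
  fix x y :: "(real^'d)^('n \<times> 'n)"
  have "lap_z E Eo ph x - lap_z E Eo ph y = (\<chi> i. \<Sum>k\<in>Eo. inc k i *\<^sub>R (x $ k - y $ k))"
    unfolding lap_z_eq_incidence_sum[OF EoE noloop orient]
    by (simp add: vec_eq_iff sum_subtractf[symmetric] scaleR_diff_right[symmetric])
  then have "dist (lap_z E Eo ph x) (lap_z E Eo ph y) \<le> real CARD('n) * (\<Sum>k\<in>Eo. norm (x $ k - y $ k))"
    using norm_incidence_sum_le[of "\<lambda>k. x $ k - y $ k" Eo] by (simp add: dist_norm)
  also have "\<dots> \<le> real CARD('n) * (\<Sum>k\<in>Eo. norm (x - y))"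
    using Finite_Cartesian_Product.norm_nth_le[of "x - y"] by (intro mult_left_mono sum_mono) auto
  finally show "dist (lap_z E Eo ph x) (lap_z E Eo ph y) \<le> real CARD('n) * real (card Eo) * dist x y"
    by (simp add: dist_norm)
qed simp

lemma field_z_lipschitz_on_cball:
  assumes EoE: "Eo \<subseteq> E" and noloop: "\<forall>(i, j)\<in>E. i \<noteq> j" and orient: "\<forall>(i, j)\<in>E. (j, i) \<notin> E"
  shows "\<exists>L. L-lipschitz_on (cball 0 B) (field_z E Eo d ph :: (real^'d)^('n::finite \<times> 'n) \<Rightarrow> _)"
proof -
  have "\<exists>L. L-lipschitz_on (cball 0 B) (\<lambda>w. rigTe E d w + lap_z E Eo ph w)"
    using lipschitz_on_add[OF rigTe_lipschitz_on_cball
        lipschitz_on_subset[OF lap_z_lipschitz[OF EoE noloop orient] subset_UNIV]] by blast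
  then show ?thesis unfolding field_z_def[abs_def] using lipschitz_on_minus by blast
qed

lemma zdyn_lipschitz_on:
  assumes EoE: "Eo \<subseteq> E" and noloop: "\<forall>(i, j)\<in>E. i \<noteq> j" and orient: "\<forall>(i, j)\<in>E. (j, i) \<notin> E"
  shows "\<exists>L. L-lipschitz_on (range (zof E) \<inter> cball 0 B)
      (zdyn E Eo d ph :: (real^'d)^('n::finite \<times> 'n) \<Rightarrow> _)"
proof -
  obtain K where K: "K-lipschitz_on UNIV (zof E :: (real^'d)^'n \<Rightarrow> _)"
    using bounded_linear.lipschitz_boundE[OF bounded_linear_zof] by blast
  obtain L where "L-lipschitz_on (cball 0 B) (field_z E Eo d ph :: (real^'d)^('n \<times> 'n) \<Rightarrow> _)"
    using field_z_lipschitz_on_cball[OF EoE noloop orient] by blast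
  from lipschitz_on_compose2[OF this lipschitz_on_subset[OF K]]
  have "(K * L)-lipschitz_on (range (zof E) \<inter> cball 0 B) (\<lambda>w. zof E (field_z E Eo d ph w))"
    by (rule lipschitz_on_subset) auto
  then have "(K * L)-lipschitz_on (range (zof E) \<inter> cball 0 B) (zdyn E Eo d ph)"
    by (rule lipschitz_on_transform) (auto simp: zdyn_eq_zof_field_z[OF EoE orient])
  then show ?thesis ..
qed

lemma equilibrium_invariant_set:
  assumes EoE: "Eo \<subseteq> E" and noloop: "\<forall>(i, j)\<in>E. i \<noteq> j" and orient: "\<forall>(i, j)\<in>E. (j, i) \<notin> E"
    and w: "w \<in> range (zof E)" and eq: "field_z E Eo d ph w = 0"
  shows "invariant_set (zdyn E Eo d ph) (range (zof E)) {w}"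
  unfolding invariant_set_def
proof (intro conjI allI impI ballI)
  show "{w} \<subseteq> range (zof E)" using w by simp
next
  fix I x t
  assume sol: "is_interval I \<and> 0 \<in> I \<and> x 0 \<in> {w} \<and>
    (\<forall>t\<in>I. x t \<in> range (zof E) \<and> (x has_vector_derivative zdyn E Eo d ph (x t)) (at t within I))"
    and "t \<in> I"
  moreover have "zdyn E Eo d ph w = 0"
    using eq zdyn_eq_zof_field_z[OF EoE orient w] linear_0[OF linear_zof] by simp
  ultimately have "x t = x 0"
    using zdyn_lipschitz_on[OF EoE noloop orient]
    by (intro solution_through_equilibrium_constant[where Z = "range (zof E)" and F = "zdyn E Eo d ph"])
      auto
  then show "x t \<in> {w}" using sol by simp
qed

section \<open>Convergence of the relative dynamics\<close>

lemma zdyn_solution_in_range: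
  fixes z :: "real \<Rightarrow> (real^'d)^('n::finite \<times> 'n)"
  assumes z0: "z 0 \<in> range (zof E)"
    and z': "\<And>t. 0 \<le> t \<Longrightarrow> (z has_vector_derivative zdyn E Eo d ph (z t)) (at t within {0..})"
    and t: "0 \<le> t"
  shows "z t \<in> range (zof E)"
  using solution_stays_in_subspace[OF subspace_range_zof z0 t z'] by (simp add: zdyn_def)

lemma zdyn_solution_bounded:
  fixes z :: "real \<Rightarrow> (real^'d)^('n::finite \<times> 'n)"
  assumes EoE: "Eo \<subseteq> E" and noloop: "\<forall>(i, j)\<in>E. i \<noteq> j" and orient: "\<forall>(i, j)\<in>E. (j, i) \<notin> E"
    and z0: "z 0 \<in> range (zof E)"
    and z': "\<And>t. 0 \<le> t \<Longrightarrow> (z has_vector_derivative zdyn E Eo d ph (z t)) (at t within {0..})"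
    and t: "0 \<le> t"
  shows "z t \<in> range (zof E) \<inter> cball 0 (\<Sum>k\<in>E. 2 + (d (fst k) (snd k))\<^sup>2 + 4 * potential_z E Eo d ph (z 0))"
proof -
  have "potential_z E Eo d ph (z t) \<le> potential_z E Eo d ph (z 0)"
    using nonincreasing_of_deriv_nonpos[OF potential_z_along_zdyn[OF EoE noloop orient
          zdyn_solution_in_range[OF z0 z'] z']] t by simp
  from norm_le_of_potential_z_le[OF zdyn_solution_in_range[OF z0 z' t] this] show ?thesis
    using zdyn_solution_in_range[OF z0 z' t] by simp
qed

lemma zdyn_solution_field_z_tendsto_zero:
  fixes z :: "real \<Rightarrow> (real^'d)^('n::finite \<times> 'n)"
  assumes EoE: "Eo \<subseteq> E" and noloop: "\<forall>(i, j)\<in>E. i \<noteq> j" and orient: "\<forall>(i, j)\<in>E. (j, i) \<notin> E"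
    and z0: "z 0 \<in> range (zof E)"
    and z': "\<And>t. 0 \<le> t \<Longrightarrow> (z has_vector_derivative zdyn E Eo d ph (z t)) (at t within {0..})"
  shows "((\<lambda>t. field_z E Eo d ph (z t)) \<longlongrightarrow> 0) at_top"
proof -
  let ?F = "zdyn E Eo d ph" and ?G = "field_z E Eo d ph"
  define B where "B = (\<Sum>k\<in>E. 2 + (d (fst k) (snd k))\<^sup>2 + 4 * potential_z E Eo d ph (z 0))"
  define K where "K = range (zof E) \<inter> cball (0 :: (real^'d)^('n \<times> 'n)) B"
  have zK: "z t \<in> K" if "0 \<le> t" for t
    unfolding K_def B_def by (rule zdyn_solution_bounded[OF EoE noloop orient z0 z' that])
  obtain L where L: "L-lipschitz_on (cball 0 B) ?G"
    using field_z_lipschitz_on_cball[OF EoE noloop orient] by blast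
  obtain L' where L': "L'-lipschitz_on K ?F"
    using zdyn_lipschitz_on[OF EoE noloop orient] unfolding K_def by blast
  have "norm (z 0) \<le> B" using zK[of 0] by (simp add: K_def)
  then have "0 \<le> B" using norm_ge_zero[of "z 0"] by linarith
  moreover have "zof E (0 :: (real^'d)^'n) = 0" by (rule linear_0[OF linear_zof])
  ultimately have "0 \<in> K" unfolding K_def by (simp add: rangeI)
  \<comment> \<open>bounded velocity makes the trajectory, and hence \<open>field_z \<circ> z\<close>, uniformly continuous\<close>
  have velocity: "norm (?F (z t)) \<le> norm (?F 0) + L' * B" if "0 \<le> t" for t
  proof -
    have "norm (?F (z t)) \<le> norm (?F 0) + dist (?F (z t)) (?F 0)"
      by (simp add: dist_norm norm_triangle_sub)
    also have "dist (?F (z t)) (?F 0) \<le> L' * dist (z t) 0"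
      using lipschitz_onD[OF L' zK[OF that] \<open>0 \<in> K\<close>] .
    also have "\<dots> \<le> L' * B"
      using zK[OF that] lipschitz_on_nonneg[OF L'] by (intro mult_left_mono) (auto simp: K_def)
    finally show ?thesis by simp
  qed
  have "(norm (?F 0) + L' * B)-lipschitz_on {0..} z"
    using z' velocity order_trans[OF norm_ge_zero velocity[OF order_refl]]
    by (intro lipschitz_on_of_vector_derivative_bound[OF convex_real_interval(1)]) auto
  moreover have "L-lipschitz_on (z ` {0..}) ?G"
    using L zK unfolding K_def by (auto intro: lipschitz_on_subset)
  ultimately have "uniformly_continuous_on {0..} (\<lambda>t. ?G (z t))"
    by (intro lipschitz_on_uniformly_continuous[OF lipschitz_on_compose2])
  moreover have "bdd_below ((\<lambda>s. potential_z E Eo d ph (z s)) ` {0..})"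
    by (rule bdd_belowI[of _ 0]) (auto simp: potential_z_nonneg)
  ultimately show ?thesis
    using potential_z_along_zdyn[OF EoE noloop orient zdyn_solution_in_range[OF z0 z'] z']
    by (intro lyapunov_descent_tendsto_zero) auto
qed

lemma zdyn_solution_approaches_largest_invariant:
  fixes z :: "real \<Rightarrow> (real^'d)^('n::finite \<times> 'n)"
  assumes EoE: "Eo \<subseteq> E" and noloop: "\<forall>(i, j)\<in>E. i \<noteq> j" and orient: "\<forall>(i, j)\<in>E. (j, i) \<notin> E"
    and z0: "z 0 \<in> range (zof E)"
    and z': "\<And>t. 0 \<le> t \<Longrightarrow> (z has_vector_derivative zdyn E Eo d ph (z t)) (at t within {0..})"
    and M: "M = largest_invariant_in (zdyn E Eo d ph) (range (zof E))
                  {w. rigTe E d w + lap_z E Eo ph w = 0}"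
  shows "M \<noteq> {} \<and> ((\<lambda>t. infdist (z t) M) \<longlongrightarrow> 0) at_top"
proof -
  let ?G = "field_z E Eo d ph"
  define K where "K = range (zof E) \<inter> cball (0 :: (real^'d)^('n \<times> 'n))
      (\<Sum>k\<in>E. 2 + (d (fst k) (snd k))\<^sup>2 + 4 * potential_z E Eo d ph (z 0))"
  have "compact (cball 0 (\<Sum>k\<in>E. 2 + (d (fst k) (snd k))\<^sup>2 + 4 * potential_z E Eo d ph (z 0))
      \<inter> range (zof E))"
    by (rule compact_Int_closed[OF compact_cball closed_subspace[OF subspace_range_zof]])
  then have "compact K" unfolding K_def by (simp only: Int_commute)
  moreover have "z t \<in> K" if "0 \<le> t" for t
    unfolding K_def by (rule zdyn_solution_bounded[OF EoE noloop orient z0 z' that])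
  moreover have "continuous_on K ?G"
    using field_z_lipschitz_on_cball[OF EoE noloop orient] lipschitz_on_continuous_on
      continuous_on_subset unfolding K_def by blast
  moreover have "{w\<in>K. ?G w = 0} \<subseteq> M"
  proof
    fix w assume w: "w \<in> {w\<in>K. ?G w = 0}"
    then have "invariant_set (zdyn E Eo d ph) (range (zof E)) {w}"
      by (intro equilibrium_invariant_set[OF EoE noloop orient]) (auto simp: K_def)
    moreover have "rigTe E d w + lap_z E Eo ph w = 0"
      using w unfolding field_z_def by (simp only: mem_Collect_eq neg_equal_0_iff_equal)
    ultimately show "w \<in> M" unfolding M largest_invariant_in_def by blast
  qed
  ultimately show ?thesis
    using zdyn_solution_field_z_tendsto_zero[OF EoE noloop orient z0 z']
    by (intro infdist_tendsto_zero_of_compact_trajectory[where K = K and f = ?G]) auto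
qed

theorem theorem2:
  fixes E Eo :: "('n::finite \<times> 'n) set"
    and d :: "'n \<Rightarrow> 'n \<Rightarrow> real"
    and ph :: "'n \<Rightarrow> real^'d::finite"
  assumes dim: "CARD('d) = 2 \<or> CARD('d) = 3"
    and nagents: "CARD('n) \<ge> 2"
    and noloop: "\<forall>(i, j)\<in>E. i \<noteq> j"
    and orient: "\<forall>(i, j)\<in>E. (j, i) \<notin> E"
    and dpos: "\<forall>(i, j)\<in>E. d i j > 0"
    and dsym: "\<forall>(i, j)\<in>E. d j i = d i j"
    and EoE: "Eo \<subseteq> E"
    and phat: "\<forall>(i, j)\<in>Eo. norm (ph j - ph i) = d i j"
  shows
    "(\<forall>p i. closed_loop E Eo d ph p $ i =
        (\<Sum>j\<in>nbrs E i. ((norm (p $ j - p $ i))\<^sup>2 - (d i j)\<^sup>2) *\<^sub>R (p $ j - p $ i))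
      + (\<Sum>j\<in>nbrs Eo i. (p $ j - p $ i) - (ph j - ph i)))
   \<and> (\<forall>p. (potential E Eo d ph has_derivative (\<lambda>h. (- closed_loop E Eo d ph p) \<bullet> h)) (at p))
   \<and> (\<forall>(p :: real \<Rightarrow> (real^'d)^'n) t.
        (p has_vector_derivative closed_loop E Eo d ph (p t)) (at t) \<longrightarrow>
        ((\<lambda>s. potential E Eo d ph (p s)) has_real_derivative
            - (norm (rigTe E d (zof E (p t)) + lapbar Eo ph (p t)))\<^sup>2) (at t)
        \<and> - (norm (rigTe E d (zof E (p t)) + lapbar Eo ph (p t)))\<^sup>2 \<le> 0)
   \<and> (\<forall>p. zof E (closed_loop E Eo d ph p) = zdyn E Eo d ph (zof E p))
   \<and> (\<forall>z :: real \<Rightarrow> (real^'d)^('n \<times> 'n).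
        z 0 \<in> range (zof E) \<and>
        (\<forall>t\<ge>0. (z has_vector_derivative zdyn E Eo d ph (z t)) (at t within {0..})) \<longrightarrow>
        (let M = largest_invariant_in (zdyn E Eo d ph) (range (zof E))
                   {w. rigTe E d w + lap_z E Eo ph w = 0}
         in M \<noteq> {} \<and> ((\<lambda>t. infdist (z t) M) \<longlongrightarrow> 0) at_top))"
proof (intro conjI allI impI)
  show "closed_loop E Eo d ph p $ i =
      (\<Sum>j\<in>nbrs E i. ((norm (p $ j - p $ i))\<^sup>2 - (d i j)\<^sup>2) *\<^sub>R (p $ j - p $ i))
    + (\<Sum>j\<in>nbrs Eo i. (p $ j - p $ i) - (ph j - ph i))" for p i
    by (rule closed_loop_nth[OF noloop orient dsym])
  show "(potential E Eo d ph has_derivative (\<lambda>h. (- closed_loop E Eo d ph p) \<bullet> h)) (at p)" for p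
    by (rule potential_has_derivative[OF EoE noloop orient])
  show "((\<lambda>s. potential E Eo d ph (p s)) has_real_derivative
      - (norm (rigTe E d (zof E (p t)) + lapbar Eo ph (p t)))\<^sup>2) (at t)"
    if "(p has_vector_derivative closed_loop E Eo d ph (p t)) (at t)" for p t
    using potential_along_closed_loop[OF EoE noloop orient that] .
  show "- (norm (rigTe E d (zof E (p t)) + lapbar Eo ph (p t)))\<^sup>2 \<le> 0" for p t
    by simp
  show "zof E (closed_loop E Eo d ph p) = zdyn E Eo d ph (zof E p)" for p
    by (simp add: zdyn_eq_zof_field_z[OF EoE orient rangeI] closed_loop_eq_field_z[OF EoE orient])
  show "let M = largest_invariant_in (zdyn E Eo d ph) (range (zof E))
                  {w. rigTe E d w + lap_z E Eo ph w = 0}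
        in M \<noteq> {} \<and> ((\<lambda>t. infdist (z t) M) \<longlongrightarrow> 0) at_top"
    if "z 0 \<in> range (zof E) \<and>
        (\<forall>t\<ge>0. (z has_vector_derivative zdyn E Eo d ph (z t)) (at t within {0..}))" for z
    using that zdyn_solution_approaches_largest_invariant[OF EoE noloop orient] unfolding Let_def by blast
qed

end
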